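(* Let $(\mathcal{C},\psi)$ be a limited t-pair with $\operatorname{typ}(\mathcal{U}^{ai}_{\mathcal{C}\psi})=\alpha$. Then $\operatorname{typ}(\mathcal{U}^{di}_{\mathcal{C}\psi})\in\{\alpha,\beta\}$.
   Context: Let $\mathbb{N}=\{0,1,2,\dots\}$; for an integer $k\ge 2$ let $E_k=\{0,1,\dots,k-1\}$; let $\mathcal{P}(\mathbb{N})$ be the set of nonempty finite subsets of $\mathbb{N}$. Let $F$ be a nonempty set (of attribute names). A decision table $T\in\mathcal{M}_k(F)$ is a rectangular table with $n\ge 1$ columns labeled with attributes $f_1,\dots,f_n\in F$ (any two columns labeled with the same attribute are equal), whose rows are pairwise different tuples from $E_k^n$ (the set of rows may be empty), each row being labeled with a set of decisions from $\mathcal{P}(\mathbb{N})$. Write $At(T)=\{f_1,\dots,f_n\}$ and $\Delta(T)$ for the set of rows. For a word $\alpha=(f_{i_1},\delta_1)\cdots(f_{i_m},\delta_m)$ with $f_{i_j}\in At(T)$, $\delta_j\in E_k$, the subtable $T\alpha$ consists of the rows of $T$ having value $\delta_j$ in column $f_{i_j}$ for all $j$ ($T\lambda=T$ for the empty word $\lambda$). Operations on tables: (1) removal of a column from a table with at least two columns (if groups of equal rows appear, only the first row of each group, with its decision set, is kept); (2) changing of decisions: the decision sets attached to rows are replaced arbitrarily by sets from $\mathcal{P}(\mathbb{N})$; (3) permutation of columns: swap two columns together with their attribute labels; (4) duplication of columns: add a copy of a column (with its label) next to it. A set $\mathcal{C}\subseteq\mathcal{M}_k(F)$ is a closed class if every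 table obtained from a table of $\mathcal{C}$ by finitely many such operations belongs to $\mathcal{C}$. A decision tree over $\mathcal{M}_k(F)$ is a finite directed tree with a root (unique node with no entering edge) and at least two nodes such that the root and the edges leaving the root are unlabeled, each worker node (neither root nor terminal) is labeled with an attribute from $F$, each edge leaving a worker node is labeled with a number from $E_k$, and each terminal node is labeled with a number from $\mathbb{N}$. For a complete path $\xi$ (root to terminal node) whose worker nodes are labeled $f_{j_1},\dots,f_{j_m}$ in order, with the edges leaving them labeled $\delta_1,\dots,\delta_m$, put $\pi(\xi)=(f_{j_1},\delta_1)\cdots(f_{j_m},\delta_m)$, $\varphi(\xi)=f_{j_1}\cdots f_{j_m}$ (both empty if $m=0$), and let $\tau(\xi)$ be the label of its terminal node. A nondeterministic decision tree for $T$ is a decision tree $\Gamma$ whose worker-node attributes lie in $At(T)$, such that $\bigcup_{\xi}\Delta(T\pi(\xi))=\Delta(T)$ (union over complete paths), and for every row $r\in\Delta(T)$ and every complete path $\xi$ with $r\in\Delta(T\pi(\xi))$, $\tau(\xi)$ belongs to the decision set of $r$. A decision tree is deterministic if exactly one edge leaves the root and the edges leaving each worker node have pairwise different labels; a deterministic decision tree for $T$ is a deterministic decision tree that is a nondeterministic decision tree for $T$. A complexity measure over $\mathcal{M}_k(F)$ is any map $\psi:F^*\to\mathbb{N}$, where $F^*$ is the set of finite words over $F$ including the empty word $\lambda$. It is limited if for all words (a) $\psi(\alpha_1\alpha_2)\le\psi(\alpha_1)+\psi(\alpha_2)$, (b) $\psi(\alpha_1\alpha_2\alpha_3)\ge\psi(\alpha_1\alpha_3)$,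 (c) $\psi(\alpha)\ge|\alpha|$. For a tree, $\psi(\Gamma)=\max_\xi\psi(\varphi(\xi))$ over complete paths. For $T$ with columns labeled $f_1,\dots,f_n$: $\psi^i(T)=\psi(f_1\cdots f_n)$, $\psi^d(T)$ is the minimum complexity of a deterministic decision tree for $T$, $\psi^a(T)$ the minimum complexity of a nondeterministic decision tree for $T$. A t-pair $(\mathcal{C},\psi)$ consists of a closed class $\mathcal{C}\subseteq\mathcal{M}_k(F)$ and a complexity measure $\psi$ over $\mathcal{M}_k(F)$; it is limited if $\psi$ is limited. For $b,c\in\{i,d,a\}$ define the partial function $\mathcal{U}^{bc}_{\mathcal{C}\psi}(n)=\max\{\psi^b(T):T\in\mathcal{C},\psi^c(T)\le n\}$ (defined iff this set is nonempty and finite). For a partial function $g:\mathbb{N}\to\mathbb{N}$ with domain $\mathrm{Dom}(g)$, let $\mathrm{Dom}^+(g)=\{n\in\mathrm{Dom}(g):g(n)\ge n\}$, $\mathrm{Dom}^-(g)=\{n\in\mathrm{Dom}(g):g(n)\le n\}$. Its type $\operatorname{typ}(g)$ is: $\alpha$ if $\mathrm{Dom}(g)$ is infinite and $g$ is bounded above; $\beta$ if $\mathrm{Dom}(g)$ is infinite, $\mathrm{Dom}^+(g)$ is finite and $g$ is unbounded above; $\gamma$ if $\mathrm{Dom}^+(g)$ and $\mathrm{Dom}^-(g)$ are both infinite; $\delta$ if $\mathrm{Dom}(g)$ is infinite and $\mathrm{Dom}^-(g)$ is finite; $\epsilon$ if $\mathrm{Dom}(g)$ is finite. *)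

theory Defs
  imports Main
begin

text \<open>A decision table: list of column attribute labels, and the list of rows (in order),
  each row being a tuple (list of values) together with its decision set.\<close>
type_synonym 'f table = "'f list \<times> (nat list \<times> nat set) list"

definition cols :: "'f table \<Rightarrow> 'f list" where "cols T = fst T"
definition rows :: "'f table \<Rightarrow> (nat list \<times> nat set) list" where "rows T = snd T"

definition At :: "'f table \<Rightarrow> 'f set" where "At T = set (cols T)"
definition Delta :: "'f table \<Rightarrow> nat list set" where "Delta T = set (map fst (rows T))"

text \<open>Membership in \<open>M_k(F)\<close> (F = UNIV of type 'f).\<close>
definition tbl :: "nat \<Rightarrow> 'f table \<Rightarrow> bool" where
  "tbl k T \<longleftrightarrow> cols T \<noteq> [] \<and>
     (\<forall>(r, D) \<in> set (rows T). length r = length (cols T) \<and> (\<forall>x \<in> set r. x < k)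
        \<and> D \<noteq> {} \<and> finite D) \<and>
     distinct (map fst (rows T)) \<and>
     (\<forall>i < length (cols T). \<forall>j < length (cols T). cols T ! i = cols T ! j \<longrightarrow>
        (\<forall>(r, D) \<in> set (rows T). r ! i = r ! j))"

definition sat :: "'f table \<Rightarrow> nat list \<Rightarrow> ('f \<times> nat) list \<Rightarrow> bool" where
  "sat T r \<alpha> \<longleftrightarrow> (\<forall>(f, \<delta>) \<in> set \<alpha>. \<forall>i < length (cols T). cols T ! i = f \<longrightarrow> r ! i = \<delta>)"

definition DeltaSub :: "'f table \<Rightarrow> ('f \<times> nat) list \<Rightarrow> nat list set" where
  "DeltaSub T \<alpha> = {r \<in> Delta T. sat T r \<alpha>}"

definition del_at :: "nat \<Rightarrow> 'a list \<Rightarrow> 'a list" where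
  "del_at i xs = take i xs @ drop (Suc i) xs"

definition dup_at :: "nat \<Rightarrow> 'a list \<Rightarrow> 'a list" where
  "dup_at i xs = take (Suc i) xs @ [xs ! i] @ drop (Suc i) xs"

definition swap_at :: "nat \<Rightarrow> nat \<Rightarrow> 'a list \<Rightarrow> 'a list" where
  "swap_at i j xs = xs[i := xs ! j, j := xs ! i]"

definition keep_first :: "(nat list \<times> nat set) list \<Rightarrow> (nat list \<times> nat set) list" where
  "keep_first xs = [xs ! i. i \<leftarrow> [0..<length xs], \<forall>j < i. fst (xs ! j) \<noteq> fst (xs ! i)]"

inductive op_step :: "'f table \<Rightarrow> 'f table \<Rightarrow> bool" where
  remove: "2 \<le> length (cols T) \<Longrightarrow> i < length (cols T) \<Longrightarrow>
     op_step T (del_at i (cols T), keep_first (map (\<lambda>(r, D). (del_at i r, D)) (rows T)))"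
| change: "map fst rs = map fst (rows T) \<Longrightarrow> (\<forall>(r, D) \<in> set rs. D \<noteq> {} \<and> finite D) \<Longrightarrow>
     op_step T (cols T, rs)"
| permute: "i < length (cols T) \<Longrightarrow> j < length (cols T) \<Longrightarrow>
     op_step T (swap_at i j (cols T), map (\<lambda>(r, D). (swap_at i j r, D)) (rows T))"
| duplicate: "i < length (cols T) \<Longrightarrow>
     op_step T (dup_at i (cols T), map (\<lambda>(r, D). (dup_at i r, D)) (rows T))"

definition closed_class :: "nat \<Rightarrow> 'f table set \<Rightarrow> bool" where
  "closed_class k C \<longleftrightarrow> C \<subseteq> {T. tbl k T} \<and>
     (\<forall>T \<in> C. \<forall>T'. op_step\<^sup>*\<^sup>* T T' \<longrightarrow> T' \<in> C)"

text \<open>Subtree below the root: terminal node (with label) or worker node (attribute and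
  list of outgoing edges with their labels and target subtrees).  A decision tree is the
  nonempty list of subtrees hanging from the (unlabeled) root.\<close>
datatype 'f dtree = Leaf nat | Node 'f "(nat \<times> 'f dtree) list"

type_synonym 'f decision_tree = "'f dtree list"

inductive wf_sub :: "nat \<Rightarrow> 'f set \<Rightarrow> bool \<Rightarrow> 'f dtree \<Rightarrow> bool" for k A det where
  "wf_sub k A det (Leaf m)"
| "es \<noteq> [] \<Longrightarrow> f \<in> A \<Longrightarrow> (det \<longrightarrow> distinct (map fst es)) \<Longrightarrow>
   (\<forall>e \<in> set es. fst e < k \<and> wf_sub k A det (snd e)) \<Longrightarrow> wf_sub k A det (Node f es)"
monos Ball_def

definition wf_tree :: "nat \<Rightarrow> 'f set \<Rightarrow> bool \<Rightarrow> 'f decision_tree \<Rightarrow> bool" where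
  "wf_tree k A det \<Gamma> \<longleftrightarrow> \<Gamma> \<noteq> [] \<and> (det \<longrightarrow> length \<Gamma> = 1) \<and> (\<forall>t \<in> set \<Gamma>. wf_sub k A det t)"

inductive sub_path :: "'f dtree \<Rightarrow> ('f \<times> nat) list \<Rightarrow> nat \<Rightarrow> bool" where
  "sub_path (Leaf m) [] m"
| "(\<delta>, t) \<in> set es \<Longrightarrow> sub_path t p m \<Longrightarrow> sub_path (Node f es) ((f, \<delta>) # p) m"

text \<open>Complete paths \<open>\<xi>\<close>, represented by \<open>(\<pi>(\<xi>), \<tau>(\<xi>))\<close>.\<close>
definition cpath :: "'f decision_tree \<Rightarrow> ('f \<times> nat) list \<Rightarrow> nat \<Rightarrow> bool" where
  "cpath \<Gamma> p m \<longleftrightarrow> (\<exists>t \<in> set \<Gamma>. sub_path t p m)"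

definition tree_for :: "nat \<Rightarrow> bool \<Rightarrow> 'f table \<Rightarrow> 'f decision_tree \<Rightarrow> bool" where
  "tree_for k det T \<Gamma> \<longleftrightarrow> wf_tree k (At T) det \<Gamma> \<and>
     (\<Union>{DeltaSub T p | p m. cpath \<Gamma> p m}) = Delta T \<and>
     (\<forall>(r, D) \<in> set (rows T). \<forall>p m. cpath \<Gamma> p m \<and> r \<in> DeltaSub T p \<longrightarrow> m \<in> D)"

definition limited :: "('f list \<Rightarrow> nat) \<Rightarrow> bool" where
  "limited \<psi> \<longleftrightarrow> (\<forall>a1 a2. \<psi> (a1 @ a2) \<le> \<psi> a1 + \<psi> a2) \<and>
     (\<forall>a1 a2 a3. \<psi> (a1 @ a2 @ a3) \<ge> \<psi> (a1 @ a3)) \<and> (\<forall>a. \<psi> a \<ge> length a)"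

definition tree_cost :: "('f list \<Rightarrow> nat) \<Rightarrow> 'f decision_tree \<Rightarrow> nat" where
  "tree_cost \<psi> \<Gamma> = Max {\<psi> (map fst p) | p m. cpath \<Gamma> p m}"

definition psi_i :: "('f list \<Rightarrow> nat) \<Rightarrow> 'f table \<Rightarrow> nat" where
  "psi_i \<psi> T = \<psi> (cols T)"

definition psi_d :: "nat \<Rightarrow> ('f list \<Rightarrow> nat) \<Rightarrow> 'f table \<Rightarrow> nat" where
  "psi_d k \<psi> T = (LEAST n. \<exists>\<Gamma>. tree_for k True T \<Gamma> \<and> tree_cost \<psi> \<Gamma> = n)"

definition psi_a :: "nat \<Rightarrow> ('f list \<Rightarrow> nat) \<Rightarrow> 'f table \<Rightarrow> nat" where
  "psi_a k \<psi> T = (LEAST n. \<exists>\<Gamma>. tree_for k False T \<Gamma> \<and> tree_cost \<psi> \<Gamma> = n)"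

definition U :: "'f table set \<Rightarrow> ('f table \<Rightarrow> nat) \<Rightarrow> ('f table \<Rightarrow> nat) \<Rightarrow> nat \<Rightarrow> nat option" where
  "U C b c n = (let S = b ` {T \<in> C. c T \<le> n} in
                 if S \<noteq> {} \<and> finite S then Some (Max S) else None)"

definition Dom :: "(nat \<Rightarrow> nat option) \<Rightarrow> nat set" where
  "Dom g = {n. g n \<noteq> None}"
definition Dom_plus :: "(nat \<Rightarrow> nat option) \<Rightarrow> nat set" where
  "Dom_plus g = {n \<in> Dom g. the (g n) \<ge> n}"
definition Dom_minus :: "(nat \<Rightarrow> nat option) \<Rightarrow> nat set" where
  "Dom_minus g = {n \<in> Dom g. the (g n) \<le> n}"

definition bdd_above_pf :: "(nat \<Rightarrow> nat option) \<Rightarrow> bool" where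
  "bdd_above_pf g \<longleftrightarrow> (\<exists>B. \<forall>n \<in> Dom g. the (g n) \<le> B)"

datatype fun_type = TAlpha | TBeta | TGamma | TDelta | TEpsilon

definition has_typ :: "(nat \<Rightarrow> nat option) \<Rightarrow> fun_type \<Rightarrow> bool" where
  "has_typ g t = (case t of
      TAlpha \<Rightarrow> infinite (Dom g) \<and> bdd_above_pf g
    | TBeta \<Rightarrow> infinite (Dom g) \<and> finite (Dom_plus g) \<and> \<not> bdd_above_pf g
    | TGamma \<Rightarrow> infinite (Dom_plus g) \<and> infinite (Dom_minus g)
    | TDelta \<Rightarrow> infinite (Dom g) \<and> finite (Dom_minus g)
    | TEpsilon \<Rightarrow> finite (Dom g))"

end

theory Submission
  imports
    Defs "HOL-Library.Discrete_Functions" "HOL-Library.Infinite_Set" "HOL-Real_Asymp.Real_Asymp"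
begin

(*
  Suppose every table of C has a nondeterministic decision tree of complexity at most m.  Applied
  to the table whose rows carry their own indices as decisions, this gives every row a
  certificate: at most m attribute-value pairs, satisfied by this row only.  Hence a table with n
  columns has at most (k n + 1)^m rows.  Applied to projections of the table, the certificates
  show that only attributes f with psi [f] <= m matter, and that for every assignment v of values
  some m + 1 of them leave at most one row agreeing with v.  Querying them for the majority values
  v, every branch either keeps at most one row or deviates from v and keeps at most half of the
  rows; so a deterministic tree of depth (m + 1) log (number of rows), and hence of complexity
  O(log n) = O(log psi^i T), exists.  As this bound is eventually smaller than psi^i T, the
  inequality psi^d T >= n for a table T with psi^i T <= n holds for finitely many n only.
*)

section \<open>Rows as functions on attributes\<close>

lemma in_Delta_iff: "r \<in> Delta T \<longleftrightarrow> (\<exists>D. (r, D) \<in> set (rows T))"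
  by (force simp: Delta_def)

lemma in_At_iff: "f \<in> At T \<longleftrightarrow> (\<exists>i < length (cols T). cols T ! i = f)"
  by (auto simp: At_def in_set_conv_nth)

lemma finite_Delta: "finite (Delta T)"
  by (simp add: Delta_def)

lemma finite_At: "finite (At T)"
  by (simp add: At_def)

lemma tbl_rowD:
  assumes "tbl k T" "(r, D) \<in> set (rows T)"
  shows "length r = length (cols T)" "\<forall>x \<in> set r. x < k" "D \<noteq> {}"
  using assms unfolding tbl_def by fast+

lemma tbl_length_row: "tbl k T \<Longrightarrow> r \<in> Delta T \<Longrightarrow> length r = length (cols T)"
  by (metis in_Delta_iff tbl_rowD(1))

lemma tbl_row_nth_less: "tbl k T \<Longrightarrow> r \<in> Delta T \<Longrightarrow> i < length r \<Longrightarrow> r ! i < k"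
  by (metis in_Delta_iff nth_mem tbl_rowD(2))

text \<open>Columns with equal labels are equal in tables, so the choice of column is irrelevant.\<close>
definition attr_val :: "'f table \<Rightarrow> nat list \<Rightarrow> 'f \<Rightarrow> nat" where
  "attr_val T r f = r ! (SOME i. i < length (cols T) \<and> cols T ! i = f)"

lemma attr_val_nth:
  assumes "tbl k T" "r \<in> Delta T" "i < length (cols T)"
  shows "attr_val T r (cols T ! i) = r ! i"
proof -
  let ?j = "SOME j. j < length (cols T) \<and> cols T ! j = cols T ! i"
  have "?j < length (cols T) \<and> cols T ! ?j = cols T ! i"
    by (rule someI_ex) (use assms(3) in blast)
  moreover have "r ! j = r ! i" if "j < length (cols T)" "cols T ! j = cols T ! i" for j
    using assms that unfolding tbl_def Delta_def by fastforce
  ultimately show ?thesis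
    unfolding attr_val_def by blast
qed

lemma attr_val_less: "tbl k T \<Longrightarrow> r \<in> Delta T \<Longrightarrow> f \<in> At T \<Longrightarrow> attr_val T r f < k"
  by (metis attr_val_nth in_At_iff tbl_length_row tbl_row_nth_less)

lemma sat_iff_attr_val:
  assumes "tbl k T" "r \<in> Delta T"
  shows "sat T r p \<longleftrightarrow> (\<forall>(f, \<delta>) \<in> set p. f \<in> At T \<longrightarrow> attr_val T r f = \<delta>)"
  unfolding sat_def in_At_iff using attr_val_nth[OF assms] by fastforce

lemma sat_Cons:
  "tbl k T \<Longrightarrow> r \<in> Delta T \<Longrightarrow> f \<in> At T \<Longrightarrow>
    sat T r ((f, a) # p) \<longleftrightarrow> attr_val T r f = a \<and> sat T r p"
  by (simp add: sat_iff_attr_val)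

text \<open>
  Attributes outside the table get the junk value 0, so that the row functions of a projection
  are exactly the restrictions of the original ones.
\<close>
definition restrict0 :: "'f set \<Rightarrow> ('f \<Rightarrow> nat) \<Rightarrow> 'f \<Rightarrow> nat" where
  "restrict0 A g f = (if f \<in> A then g f else 0)"

definition row_fun :: "'f table \<Rightarrow> nat list \<Rightarrow> 'f \<Rightarrow> nat" where
  "row_fun T r = restrict0 (At T) (attr_val T r)"

definition row_funs :: "'f table \<Rightarrow> ('f \<Rightarrow> nat) set" where
  "row_funs T = row_fun T ` Delta T"

definition sat_fun :: "'f set \<Rightarrow> ('f \<Rightarrow> nat) \<Rightarrow> ('f \<times> nat) list \<Rightarrow> bool" where
  "sat_fun A g p \<longleftrightarrow> (\<forall>(f, \<delta>) \<in> set p. f \<in> A \<longrightarrow> g f = \<delta>)"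

lemma restrict0_restrict0: "restrict0 A (restrict0 B g) = restrict0 (A \<inter> B) g"
  by (auto simp: restrict0_def)

lemma row_fun_in_At: "f \<in> At T \<Longrightarrow> row_fun T r f = attr_val T r f"
  by (simp add: row_fun_def restrict0_def)

lemma row_funs_outside_At: "g \<in> row_funs T \<Longrightarrow> f \<notin> At T \<Longrightarrow> g f = 0"
  by (auto simp: row_funs_def row_fun_def restrict0_def)

lemma sat_iff_sat_fun: "tbl k T \<Longrightarrow> r \<in> Delta T \<Longrightarrow> sat T r p \<longleftrightarrow> sat_fun (At T) (row_fun T r) p"
  by (auto simp: sat_iff_attr_val sat_fun_def row_fun_in_At)

lemma inj_on_row_fun:
  assumes "tbl k T"
  shows "inj_on (row_fun T) (Delta T)"
proof
  fix r s
  assume r: "r \<in> Delta T" and s: "s \<in> Delta T" and eq: "row_fun T r = row_fun T s"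
  show "r = s"
  proof (rule nth_equalityI)
    show "length r = length s"
      using tbl_length_row[OF assms r] tbl_length_row[OF assms s] by simp
    fix i
    assume "i < length r"
    then have i: "i < length (cols T)"
      using tbl_length_row[OF assms r] by simp
    then have "row_fun T r (cols T ! i) = row_fun T s (cols T ! i)"
      using eq by simp
    then show "r ! i = s ! i"
      using i by (simp add: row_fun_in_At At_def attr_val_nth[OF assms r] attr_val_nth[OF assms s])
  qed
qed

section \<open>Projections of tables in a closed class\<close>

lemma closed_class_tbl: "closed_class k C \<Longrightarrow> T \<in> C \<Longrightarrow> tbl k T"
  unfolding closed_class_def by blast

lemma closed_class_step: "closed_class k C \<Longrightarrow> T \<in> C \<Longrightarrow> op_step T T' \<Longrightarrow> T' \<in> C"
  unfolding closed_class_def by blast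

lemma fst_set_keep_first: "fst ` set (keep_first xs) = fst ` set xs"
proof
  show "fst ` set (keep_first xs) \<subseteq> fst ` set xs"
    by (auto simp: keep_first_def)
  show "fst ` set xs \<subseteq> fst ` set (keep_first xs)"
  proof
    fix x
    assume "x \<in> fst ` set xs"
    then have ex: "\<exists>i. i < length xs \<and> fst (xs ! i) = x"
      by (auto simp: in_set_conv_nth) (metis fst_conv)
    define i where "i = (LEAST i. i < length xs \<and> fst (xs ! i) = x)"
    have i: "i < length xs" "fst (xs ! i) = x"
      using LeastI_ex[OF ex] by (simp_all add: i_def)
    have "\<forall>j < i. fst (xs ! j) \<noteq> fst (xs ! i)"
    proof (intro allI impI)
      fix j
      assume "j < i"
      then show "fst (xs ! j) \<noteq> fst (xs ! i)"
        using not_less_Least[of j "\<lambda>i. i < length xs \<and> fst (xs ! i) = x"] i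
        unfolding i_def by auto
    qed
    then show "x \<in> fst ` set (keep_first xs)"
      using i unfolding keep_first_def by force
  qed
qed

lemma length_del_at: "i < length xs \<Longrightarrow> length (del_at i xs) = length xs - 1"
  by (simp add: del_at_def)

lemma nth_del_at:
  "i < length xs \<Longrightarrow> j < length xs - 1 \<Longrightarrow> del_at i xs ! j = xs ! (if j < i then j else Suc j)"
  by (auto simp: del_at_def nth_append min_def)

lemma set_del_at_subset: "set (del_at i xs) \<subseteq> set xs"
  unfolding del_at_def using set_drop_subset set_take_subset by fastforce

lemma set_del_at_supset: "i < length xs \<Longrightarrow> set xs - {xs ! i} \<subseteq> set (del_at i xs)"
  unfolding del_at_def by (subst (1) id_take_nth_drop[of i xs]) auto

lemma length_filter_del_at_less:
  "i < length xs \<Longrightarrow> P (xs ! i) \<Longrightarrow> length (filter P (del_at i xs)) < length (filter P xs)"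
  unfolding del_at_def by (subst (2) id_take_nth_drop[of i xs]) auto

definition remove_col :: "nat \<Rightarrow> 'f table \<Rightarrow> 'f table" where
  "remove_col i T = (del_at i (cols T), keep_first (map (\<lambda>(r, D). (del_at i r, D)) (rows T)))"

lemma cols_remove_col: "cols (remove_col i T) = del_at i (cols T)"
  by (simp add: remove_col_def cols_def)

lemma Delta_remove_col: "Delta (remove_col i T) = del_at i ` Delta T"
  unfolding Delta_def remove_col_def rows_def
  by (simp add: fst_set_keep_first image_image case_prod_beta)

lemma remove_col_in_class:
  "closed_class k C \<Longrightarrow> T \<in> C \<Longrightarrow> 2 \<le> length (cols T) \<Longrightarrow> i < length (cols T) \<Longrightarrow> remove_col i T \<in> C"
  unfolding remove_col_def by (rule closed_class_step) (auto intro: op_step.remove)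

lemma row_fun_remove_col:
  assumes T: "tbl k T" and T': "tbl k (remove_col i T)" and i: "i < length (cols T)"
    and r: "r \<in> Delta T"
  shows "row_fun (remove_col i T) (del_at i r) = restrict0 (At (remove_col i T)) (row_fun T r)"
proof
  fix f
  show "row_fun (remove_col i T) (del_at i r) f = restrict0 (At (remove_col i T)) (row_fun T r) f"
  proof (cases "f \<in> At (remove_col i T)")
    case True
    then obtain j where j: "j < length (cols T) - 1" "del_at i (cols T) ! j = f"
      by (auto simp: in_At_iff cols_remove_col length_del_at[OF i])
    define j' where "j' = (if j < i then j else Suc j)"
    have j': "j' < length (cols T)" "f = cols T ! j'"
      using j nth_del_at[OF i j(1)] by (auto simp: j'_def)
    have jT: "j < length (cols (remove_col i T))"
      using j(1) by (simp add: cols_remove_col length_del_at[OF i])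
    have "del_at i r ! j = r ! j'"
      using nth_del_at[of i r j] j(1) i tbl_length_row[OF T r] by (simp add: j'_def)
    moreover have "del_at i r \<in> Delta (remove_col i T)"
      using r by (simp add: Delta_remove_col)
    ultimately have "attr_val (remove_col i T) (del_at i r) f = attr_val T r f"
      using attr_val_nth[OF T' _ jT] attr_val_nth[OF T r j'(1)] j j'
      by (simp add: cols_remove_col)
    moreover have "f \<in> At T"
      using True set_del_at_subset[of i "cols T"] by (auto simp: At_def cols_remove_col)
    ultimately show ?thesis
      using True by (simp add: row_fun_def restrict0_def)
  qed (simp add: row_fun_def restrict0_def)
qed

lemma row_funs_remove_col:
  assumes "tbl k T" "tbl k (remove_col i T)" "i < length (cols T)"
  shows "row_funs (remove_col i T) = restrict0 (At (remove_col i T)) ` row_funs T"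
proof -
  have "row_funs (remove_col i T) = (\<lambda>r. row_fun (remove_col i T) (del_at i r)) ` Delta T"
    unfolding row_funs_def Delta_remove_col image_image ..
  also have "\<dots> = (\<lambda>r. restrict0 (At (remove_col i T)) (row_fun T r)) ` Delta T"
    using row_fun_remove_col[OF assms] by (rule image_cong[OF refl])
  finally show ?thesis
    unfolding row_funs_def image_image .
qed

lemma closed_class_restrict:
  assumes "closed_class k C" "T \<in> C" "A \<inter> At T \<noteq> {}"
  shows "\<exists>T' \<in> C. At T' = At T \<inter> A \<and> row_funs T' = restrict0 (At T \<inter> A) ` row_funs T"
  using assms(2,3)
proof (induction "length (filter (\<lambda>f. f \<notin> A) (cols T))" arbitrary: T rule: less_induct)
  case less
  show ?case
  proof (cases "At T \<subseteq> A")
    case True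
    then have "restrict0 (At T \<inter> A) ` row_funs T = row_funs T"
      by (simp add: Int_absorb2 row_funs_def row_fun_def restrict0_restrict0 image_image)
    moreover have "At T \<inter> A = At T"
      using True by blast
    ultimately show ?thesis
      using less.prems(1) by auto
  next
    case False
    then obtain i where i: "i < length (cols T)" "cols T ! i \<notin> A"
      unfolding subset_iff in_At_iff by blast
    obtain j where j: "j < length (cols T)" "cols T ! j \<in> A"
      using less.prems(2) by (auto simp: in_At_iff)
    have "i \<noteq> j"
      using i(2) j(2) by auto
    then have two: "2 \<le> length (cols T)"
      using i(1) j(1) by linarith
    let ?T = "remove_col i T"
    have "?T \<in> C"
      using remove_col_in_class[OF assms(1) less.prems(1) two i(1)] .
    have At_eq: "At ?T \<inter> A = At T \<inter> A"
      using set_del_at_subset[of i "cols T"] set_del_at_supset[OF i(1)] i(2)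
      unfolding At_def cols_remove_col by blast
    have "length (filter (\<lambda>f. f \<notin> A) (cols ?T)) < length (filter (\<lambda>f. f \<notin> A) (cols T))"
      unfolding cols_remove_col using length_filter_del_at_less[of i "cols T" "\<lambda>f. f \<notin> A", OF i] .
    moreover have "A \<inter> At ?T \<noteq> {}"
      using less.prems(2) At_eq by blast
    ultimately obtain T' where T': "T' \<in> C" "At T' = At ?T \<inter> A"
        "row_funs T' = restrict0 (At ?T \<inter> A) ` row_funs ?T"
      using less.hyps \<open>?T \<in> C\<close> by blast
    have "At ?T \<inter> A \<inter> At ?T = At T \<inter> A"
      using At_eq by blast
    then have "At T' = At T \<inter> A \<and> row_funs T' = restrict0 (At T \<inter> A) ` row_funs T"
      using T'(2,3) At_eq row_funs_remove_col[OF closed_class_tbl[OF assms(1) less.prems(1)]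
          closed_class_tbl[OF assms(1) \<open>?T \<in> C\<close>] i(1)]
      by (simp add: image_image restrict0_restrict0)
    then show ?thesis
      by (rule bexI[OF _ T'(1)])
  qed
qed

section \<open>Decision trees\<close>

lemma sub_path_Leaf_iff: "sub_path (Leaf d) p m \<longleftrightarrow> p = [] \<and> m = d"
  by (auto elim: sub_path.cases intro: sub_path.intros)

lemma sub_path_Node_iff:
  "sub_path (Node f es) q m \<longleftrightarrow> (\<exists>a t p. q = (f, a) # p \<and> (a, t) \<in> set es \<and> sub_path t p m)"
  by (auto elim!: sub_path.cases[of "Node f es"] intro: sub_path.intros)

lemma sub_path_attrs:
  "sub_path t p m \<Longrightarrow> wf_sub k A det t \<Longrightarrow> set p \<subseteq> A \<times> {..<k}"
proof (induction rule: sub_path.induct)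
  case (2 \<delta> t es p m f)
  then show ?case
    by (fastforce elim: wf_sub.cases)
qed simp

lemma wf_sub_has_path: "wf_sub k A det t \<Longrightarrow> \<exists>p m. sub_path t p m"
proof (induction rule: wf_sub.induct)
  case (1 m)
  then show ?case
    by (auto intro: sub_path.intros)
next
  case (2 es f)
  then obtain a t where "(a, t) \<in> set es"
    by (metis list.set_sel(1) prod.collapse)
  then show ?case
    using 2(4) by (fastforce intro: sub_path.intros)
qed

lemma finite_sub_paths: "finite {(p, m). sub_path t p m}"
proof (induction t)
  case (Leaf d)
  then show ?case
    by (simp add: sub_path_Leaf_iff)
next
  case (Node f es)
  have "{(q, m). sub_path (Node f es) q m}
      \<subseteq> (\<Union>(a, t) \<in> set es. (\<lambda>(p, m). ((f, a) # p, m)) ` {(p, m). sub_path t p m})"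
    by (force simp: sub_path_Node_iff)
  moreover have "finite (\<Union>(a, t) \<in> set es. (\<lambda>(p, m). ((f, a) # p, m)) ` {(p, m). sub_path t p m})"
    using Node by (auto intro!: finite_UN_I intro: snds.intros)
  ultimately show ?case
    by (rule finite_subset)
qed

lemma finite_path_costs: "finite {\<psi> (map fst p) | p m. cpath \<Gamma> p m}"
proof -
  have "{(p, m). cpath \<Gamma> p m} = (\<Union>t \<in> set \<Gamma>. {(p, m). sub_path t p m})"
    by (auto simp: cpath_def)
  then have "finite {(p, m). cpath \<Gamma> p m}"
    using finite_sub_paths by auto
  then have "finite ((\<lambda>(p, m). \<psi> (map fst p)) ` {(p, m). cpath \<Gamma> p m})"
    by (rule finite_imageI)
  moreover have "{\<psi> (map fst p) | p m. cpath \<Gamma> p m}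
      = (\<lambda>(p, m). \<psi> (map fst p)) ` {(p, m). cpath \<Gamma> p m}"
    by auto
  ultimately show ?thesis
    by simp
qed

lemma path_cost_le_tree_cost: "cpath \<Gamma> p m \<Longrightarrow> \<psi> (map fst p) \<le> tree_cost \<psi> \<Gamma>"
  unfolding tree_cost_def by (rule Max_ge[OF finite_path_costs]) blast

lemma psi_d_le_tree_cost: "tree_for k True T \<Gamma> \<Longrightarrow> psi_d k \<psi> T \<le> tree_cost \<psi> \<Gamma>"
  unfolding psi_d_def by (rule Least_le) blast

fun path_tree :: "('f \<times> nat) list \<Rightarrow> nat \<Rightarrow> 'f dtree" where
  "path_tree [] d = Leaf d"
| "path_tree ((f, a) # p) d = Node f [(a, path_tree p d)]"

lemma sub_path_path_tree_iff: "sub_path (path_tree p d) q m \<longleftrightarrow> q = p \<and> m = d"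
  by (induction p d arbitrary: q rule: path_tree.induct)
    (auto simp: sub_path_Leaf_iff sub_path_Node_iff)

lemma wf_sub_path_tree: "set p \<subseteq> A \<times> {..<k} \<Longrightarrow> wf_sub k A det (path_tree p d)"
  by (induction p d rule: path_tree.induct) (auto intro: wf_sub.intros)

lemma sat_zip_cols:
  assumes "tbl k T" "r \<in> Delta T"
  shows "sat T r (zip (cols T) r)"
  unfolding sat_iff_attr_val[OF assms] by (auto simp: in_set_zip attr_val_nth[OF assms])

lemma sat_zip_cols_unique:
  assumes "tbl k T" "r \<in> Delta T" "s \<in> Delta T" "sat T s (zip (cols T) r)"
  shows "s = r"
proof (rule nth_equalityI)
  show "length s = length r"
    using tbl_length_row[OF assms(1,2)] tbl_length_row[OF assms(1,3)] by simp
  fix i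
  assume "i < length s"
  then have "i < length (cols T)" "i < length r"
    using tbl_length_row[OF assms(1,2)] tbl_length_row[OF assms(1,3)] by auto
  then show "s ! i = r ! i"
    using assms(4) by (fastforce simp: sat_def in_set_zip)
qed

lemma tbl_rows_unique: "tbl k T \<Longrightarrow> (r, D) \<in> set (rows T) \<Longrightarrow> (r, D') \<in> set (rows T) \<Longrightarrow> D = D'"
  unfolding tbl_def using eq_key_imp_eq_value by metis

text \<open>One path per row, reading off all of its columns.\<close>
lemma nondet_tree_exists:
  assumes T: "tbl k T"
  shows "\<exists>\<Gamma>. tree_for k False T \<Gamma>"
proof (cases "rows T = []")
  case True
  then have "tree_for k False T [Leaf 0]"
    by (auto simp: tree_for_def wf_tree_def Delta_def DeltaSub_def intro: wf_sub.intros)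
  then show ?thesis ..
next
  case False
  define \<Gamma> where "\<Gamma> = map (\<lambda>(r, D). path_tree (zip (cols T) r) (SOME d. d \<in> D)) (rows T)"
  have cpath_iff: "cpath \<Gamma> p m \<longleftrightarrow>
      (\<exists>r D. (r, D) \<in> set (rows T) \<and> p = zip (cols T) r \<and> m = (SOME d. d \<in> D))" for p m
    unfolding cpath_def \<Gamma>_def by (force simp: sub_path_path_tree_iff)
  have "wf_sub k (At T) False (path_tree (zip (cols T) r) d)" if "(r, D) \<in> set (rows T)" for r D d
    using tbl_rowD(2)[OF T that]
    by (intro wf_sub_path_tree) (auto simp: At_def dest: set_zip_leftD set_zip_rightD)
  then have "wf_tree k (At T) False \<Gamma>"
    using False by (auto simp: wf_tree_def \<Gamma>_def)
  moreover have "\<Union>{DeltaSub T p | p m. cpath \<Gamma> p m} = Delta T"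
  proof
    show "Delta T \<subseteq> \<Union>{DeltaSub T p | p m. cpath \<Gamma> p m}"
    proof
      fix r
      assume r: "r \<in> Delta T"
      then obtain D where "(r, D) \<in> set (rows T)"
        by (auto simp: in_Delta_iff)
      then have "cpath \<Gamma> (zip (cols T) r) (SOME d. d \<in> D)"
        using cpath_iff by blast
      moreover have "r \<in> DeltaSub T (zip (cols T) r)"
        using sat_zip_cols[OF T r] r by (simp add: DeltaSub_def)
      ultimately show "r \<in> \<Union>{DeltaSub T p | p m. cpath \<Gamma> p m}"
        by blast
    qed
  qed (auto simp: DeltaSub_def)
  moreover have "m \<in> D"
    if sD: "(s, D) \<in> set (rows T)" and p: "cpath \<Gamma> p m" and s: "s \<in> DeltaSub T p" for s D p m
  proof -
    obtain r D' where rD': "(r, D') \<in> set (rows T)" "p = zip (cols T) r" "m = (SOME d. d \<in> D')"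
      using p cpath_iff by blast
    have "r \<in> Delta T" "s \<in> Delta T"
      using rD'(1) sD by (auto simp: in_Delta_iff)
    then have "s = r"
      using sat_zip_cols_unique[OF T] s rD'(2) by (simp add: DeltaSub_def)
    then have "D' = D"
      using tbl_rows_unique[OF T] sD rD'(1) by blast
    then show "m \<in> D"
      using tbl_rowD(3)[OF T sD] rD'(3) by (simp add: some_in_eq)
  qed
  ultimately show ?thesis
    unfolding tree_for_def by blast
qed

section \<open>Limited complexity measures\<close>

lemma limited_length_le: "limited \<psi> \<Longrightarrow> length xs \<le> \<psi> xs"
  unfolding limited_def by blast

lemma limited_singleton_le:
  assumes "limited \<psi>" "f \<in> set xs"
  shows "\<psi> [f] \<le> \<psi> xs"
proof -
  obtain ys zs where xs: "xs = ys @ f # zs"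
    using assms(2) by (meson split_list)
  have "\<psi> ([] @ [f] @ zs) \<le> \<psi> ([] @ ys @ [f] @ zs)" "\<psi> ([f] @ []) \<le> \<psi> ([f] @ zs @ [])"
    using assms(1) unfolding limited_def by blast+
  then show ?thesis
    unfolding xs by simp
qed

lemma limited_le_sum_singletons:
  assumes "limited \<psi>" "\<And>f. f \<in> set xs \<Longrightarrow> \<psi> [f] \<le> m"
  shows "\<psi> xs \<le> \<psi> [] + m * length xs"
  using assms(2)
proof (induction xs)
  case (Cons x xs)
  have "\<psi> ([x] @ xs) \<le> \<psi> [x] + \<psi> xs"
    using assms(1) unfolding limited_def by blast
  moreover have "\<psi> [x] \<le> m"
    using Cons.prems by simp
  moreover have "\<psi> xs \<le> \<psi> [] + m * length xs"
    using Cons by simp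
  ultimately show ?case
    by simp
qed simp

section \<open>Deterministic trees by repeated halving\<close>

definition decisions :: "'f table \<Rightarrow> nat list \<Rightarrow> nat set" where
  "decisions T r = (SOME D. (r, D) \<in> set (rows T))"

lemma decisions_eq: "tbl k T \<Longrightarrow> (r, D) \<in> set (rows T) \<Longrightarrow> decisions T r = D"
  unfolding decisions_def by (rule some_equality) (auto dest: tbl_rows_unique)

lemma decisions_nonempty: "tbl k T \<Longrightarrow> r \<in> Delta T \<Longrightarrow> decisions T r \<noteq> {}"
  by (metis decisions_eq in_Delta_iff tbl_rowD(3))

definition decides :: "nat \<Rightarrow> 'f table \<Rightarrow> 'f set \<Rightarrow> nat list set \<Rightarrow> nat \<Rightarrow> 'f dtree \<Rightarrow> bool" where
  "decides k T W R d t \<longleftrightarrow> wf_sub k (At T) True t \<and>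
     (\<forall>p m. sub_path t p m \<longrightarrow>
        length p \<le> d \<and> fst ` set p \<subseteq> W \<and> (\<forall>r \<in> R. sat T r p \<longrightarrow> m \<in> decisions T r)) \<and>
     (\<forall>r \<in> R. \<exists>p m. sub_path t p m \<and> sat T r p)"

lemma decides_mono: "decides k T W R d t \<Longrightarrow> d \<le> d' \<Longrightarrow> decides k T W R d' t"
  unfolding decides_def by fastforce

lemma decides_Leaf:
  assumes "tbl k T" "R \<subseteq> Delta T" "card R \<le> 1"
  shows "\<exists>t. decides k T W R d t"
proof -
  have "finite R"
    using assms(2) finite_Delta by (rule finite_subset)
  then have "R = {} \<or> (\<exists>r. R = {r})"
    using assms(3) by (metis card_0_eq card_1_singletonE le_SucE One_nat_def le_zero_eq)
  then have "\<exists>m. \<forall>r \<in> R. m \<in> decisions T r"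
    using assms(1,2) decisions_nonempty by blast
  then have "\<forall>r \<in> R. (SOME m. \<forall>r \<in> R. m \<in> decisions T r) \<in> decisions T r"
    by (rule someI_ex)
  then have "decides k T W R d (Leaf (SOME m. \<forall>r \<in> R. m \<in> decisions T r))"
    by (auto simp: decides_def sub_path_Leaf_iff sat_def intro: wf_sub.intros)
  then show ?thesis ..
qed

lemma decides_Node:
  assumes T: "tbl k T" and k: "0 < k" and f: "f \<in> W" "f \<in> At T" and R: "R \<subseteq> Delta T"
    and ts: "\<And>a. a < k \<Longrightarrow> decides k T W {r \<in> R. attr_val T r f = a} d (ts a)"
  shows "decides k T W R (Suc d) (Node f (map (\<lambda>a. (a, ts a)) [0..<k]))"
proof -
  let ?es = "map (\<lambda>a. (a, ts a)) [0..<k]"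
  have "wf_sub k (At T) True (Node f ?es)"
    using k f(2) ts by (intro wf_sub.intros) (auto simp: decides_def comp_def)
  moreover have "length q \<le> Suc d \<and> fst ` set q \<subseteq> W \<and> (\<forall>r \<in> R. sat T r q \<longrightarrow> m \<in> decisions T r)"
    if path: "sub_path (Node f ?es) q m" for q m
  proof -
    obtain a p where q: "q = (f, a) # p" "a < k" "sub_path (ts a) p m"
      using path by (auto simp: sub_path_Node_iff)
    have "sat T r q \<longleftrightarrow> r \<in> {r \<in> R. attr_val T r f = a} \<and> sat T r p" if "r \<in> R" for r
      using sat_Cons[OF T _ f(2)] R that q(1) by auto
    then show ?thesis
      using ts[OF q(2)] q f(1) unfolding decides_def by auto
  qed
  moreover have "\<exists>q m. sub_path (Node f ?es) q m \<and> sat T r q" if r: "r \<in> R" for r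
  proof -
    let ?a = "attr_val T r f"
    have "?a < k"
      using attr_val_less[OF T _ f(2)] R r by blast
    moreover have "r \<in> {r \<in> R. attr_val T r f = ?a}"
      using r by simp
    ultimately obtain p m where p: "sub_path (ts ?a) p m" "sat T r p"
      using ts unfolding decides_def by blast
    have "(?a, ts ?a) \<in> set ?es"
      using \<open>?a < k\<close> by simp
    then have "sub_path (Node f ?es) ((f, ?a) # p) m"
      using p(1) by (rule sub_path.intros)
    moreover have "sat T r ((f, ?a) # p)"
      using sat_Cons[OF T _ f(2)] R r p(2) by auto
    ultimately show ?thesis
      by blast
  qed
  ultimately show ?thesis
    unfolding decides_def by blast
qed

lemma decides_query:
  assumes T: "tbl k T" and k: "0 < k"
  shows "distinct Q \<Longrightarrow> set Q \<subseteq> W \<inter> At T \<Longrightarrow> R \<subseteq> Delta T \<Longrightarrow>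
    (\<And>w. \<exists>t. decides k T W {r \<in> R. \<forall>f \<in> set Q. attr_val T r f = w f} d t) \<Longrightarrow>
    \<exists>t. decides k T W R (d + length Q) t"
proof (induction Q arbitrary: R)
  case Nil
  then show ?case
    by simp
next
  case (Cons f Q)
  have "\<exists>t. decides k T W {r \<in> R. attr_val T r f = a} (d + length Q) t" for a
  proof (rule Cons.IH)
    show "distinct Q" "set Q \<subseteq> W \<inter> At T" "{r \<in> R. attr_val T r f = a} \<subseteq> Delta T"
      using Cons.prems(1-3) by auto
    fix w
    have "{r \<in> {r \<in> R. attr_val T r f = a}. \<forall>g \<in> set Q. attr_val T r g = w g}
        = {r \<in> R. \<forall>g \<in> set (f # Q). attr_val T r g = (w(f := a)) g}"
      using Cons.prems(1) by auto
    then show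
      "\<exists>t. decides k T W {r \<in> {r \<in> R. attr_val T r f = a}. \<forall>g \<in> set Q. attr_val T r g = w g} d t"
      using Cons.prems(4) by presburger
  qed
  then obtain ts where "\<And>a. decides k T W {r \<in> R. attr_val T r f = a} (d + length Q) (ts a)"
    by metis
  then have "decides k T W R (Suc (d + length Q)) (Node f (map (\<lambda>a. (a, ts a)) [0..<k]))"
    using decides_Node[OF T k] Cons.prems(2,3) by simp
  then show ?case
    by auto
qed

definition separates :: "('f \<Rightarrow> nat) set \<Rightarrow> ('f \<Rightarrow> nat) \<Rightarrow> 'f set \<Rightarrow> bool" where
  "separates G v S \<longleftrightarrow> (\<forall>g \<in> G. \<forall>g' \<in> G. (\<forall>f \<in> S. g f = v f) \<longrightarrow> (\<forall>f \<in> S. g' f = v f) \<longrightarrow> g = g')"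

lemma not_separates_Diff_singleton:
  assumes "separates G v S" "\<not> separates G v (S - {j})"
  shows "\<exists>g \<in> G. (\<forall>f \<in> S - {j}. g f = v f) \<and> g j \<noteq> v j"
proof -
  obtain g g' where "g \<in> G" "g' \<in> G" "g \<noteq> g'"
    and "\<forall>f \<in> S - {j}. g f = v f" "\<forall>f \<in> S - {j}. g' f = v f"
    using assms(2) unfolding separates_def by blast
  moreover have "\<forall>f \<in> S. g f = v f \<Longrightarrow> \<forall>f \<in> S. g' f = v f \<Longrightarrow> g = g'"
    using assms(1) \<open>g \<in> G\<close> \<open>g' \<in> G\<close> unfolding separates_def by blast
  ultimately show ?thesis
    by (metis Diff_iff singletonD)
qed

lemma card_rows_agreeing_le_1:
  assumes T: "tbl k T" and S: "S \<subseteq> At T" "separates (row_funs T) v S" and R: "R \<subseteq> Delta T"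
  shows "card {r \<in> R. \<forall>f \<in> S. attr_val T r f = v f} \<le> 1"
proof -
  have "r = s"
    if "r \<in> R" "s \<in> R" "\<forall>f \<in> S. attr_val T r f = v f" "\<forall>f \<in> S. attr_val T s f = v f" for r s
  proof -
    have "row_fun T r = row_fun T s"
      using S that R by (auto simp: separates_def row_funs_def row_fun_in_At subset_iff)
    then show "r = s"
      using inj_on_row_fun[OF T] R that(1,2) by (auto dest: inj_onD)
  qed
  moreover have "finite R"
    using R finite_Delta by (rule finite_subset)
  ultimately show ?thesis
    by (auto simp: card_le_Suc0_iff_eq)
qed

lemma exists_majority_value:
  assumes "finite R"
  shows "\<exists>a. \<forall>b. card {r \<in> R. h r = b} \<le> card {r \<in> R. h r = a}"
proof -
  have "card {r \<in> R. h r = b} < Suc (card R)" for b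
    using card_mono[OF assms, of "{r \<in> R. h r = b}"] by auto
  then show ?thesis
    using Lattices_Big.ex_has_greatest_nat[where P = "\<lambda>_. True" and k = undefined
        and f = "\<lambda>b. card {r \<in> R. h r = b}" and b = "Suc (card R)"]
    by blast
qed

lemma card_minority_le_half:
  assumes "finite R" "\<forall>b. card {r \<in> R. h r = b} \<le> card {r \<in> R. h r = a}" "b \<noteq> a"
  shows "2 * card {r \<in> R. h r = b} \<le> card R"
proof -
  have "card {r \<in> R. h r = b} + card {r \<in> R. h r = a} = card ({r \<in> R. h r = b} \<union> {r \<in> R. h r = a})"
    using assms by (intro card_Un_disjoint[symmetric]) auto
  also have "\<dots> \<le> card R"
    using assms(1) by (intro card_mono) auto
  finally show ?thesis
    using assms(2)[rule_format, of b] by linarith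
qed

text \<open>
  Query a separating list for the majority values: a branch agreeing with them keeps at most
  one row, every other branch deviates at some attribute and keeps at most half of the rows.
\<close>
lemma decides_halving:
  assumes T: "tbl k T" and k: "0 < k"
    and sep: "\<And>v. \<exists>Q. distinct Q \<and> set Q \<subseteq> W \<inter> At T \<and> length Q \<le> M \<and>
      separates (row_funs T) v (set Q)"
  shows "R \<subseteq> Delta T \<Longrightarrow> card R \<le> 2 ^ c \<Longrightarrow> \<exists>t. decides k T W R (M * c) t"
proof (induction c arbitrary: R)
  case 0
  then show ?case
    using decides_Leaf[OF T] by simp
next
  case (Suc c)
  have R: "finite R"
    using Suc.prems(1) finite_Delta by (rule finite_subset)
  define v where
    "v f = (SOME a. \<forall>b. card {r \<in> R. attr_val T r f = b} \<le> card {r \<in> R. attr_val T r f = a})" for f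
  have v: "\<forall>b. card {r \<in> R. attr_val T r f = b} \<le> card {r \<in> R. attr_val T r f = v f}" for f
    unfolding v_def by (rule someI_ex) (rule exists_majority_value[OF R])
  obtain Q where Q: "distinct Q" "set Q \<subseteq> W \<inter> At T" "length Q \<le> M"
      "separates (row_funs T) v (set Q)"
    using sep by blast
  have "\<exists>t. decides k T W R (M * c + length Q) t"
  proof (rule decides_query[OF T k Q(1,2) Suc.prems(1)])
    fix w
    let ?S = "{r \<in> R. \<forall>f \<in> set Q. attr_val T r f = w f}"
    have "card ?S \<le> 2 ^ c"
    proof (cases "\<forall>f \<in> set Q. w f = v f")
      case True
      then have "card ?S \<le> 1"
        using card_rows_agreeing_le_1[OF T _ Q(4) Suc.prems(1)] Q(2) by simp
      then show ?thesis
        using one_le_power[of "2::nat" c] by linarith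
    next
      case False
      then obtain f where f: "f \<in> set Q" "w f \<noteq> v f"
        by blast
      then have "card ?S \<le> card {r \<in> R. attr_val T r f = w f}"
        using R by (intro card_mono) auto
      moreover have "2 * card {r \<in> R. attr_val T r f = w f} \<le> card R"
        by (rule card_minority_le_half[OF R v f(2)])
      ultimately show ?thesis
        using Suc.prems(2) by simp
    qed
    moreover have "?S \<subseteq> Delta T"
      using Suc.prems(1) by blast
    ultimately show "\<exists>t. decides k T W ?S (M * c) t"
      using Suc.IH by blast
  qed
  moreover have "M * c + length Q \<le> M * Suc c"
    using Q(3) by simp
  ultimately show ?case
    using decides_mono by blast
qed

lemma tree_for_decides:
  assumes T: "tbl k T" and t: "decides k T W (Delta T) d t"
  shows "tree_for k True T [t]"
  unfolding tree_for_def
proof (intro conjI)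
  show "wf_tree k (At T) True [t]"
    using t by (simp add: decides_def wf_tree_def)
  show "\<Union>{DeltaSub T p | p m. cpath [t] p m} = Delta T"
  proof
    show "Delta T \<subseteq> \<Union>{DeltaSub T p | p m. cpath [t] p m}"
    proof
      fix r
      assume r: "r \<in> Delta T"
      then obtain p m where "sub_path t p m" "sat T r p"
        using t unfolding decides_def by blast
      then show "r \<in> \<Union>{DeltaSub T p | p m. cpath [t] p m}"
        using r by (auto simp: cpath_def DeltaSub_def)
    qed
  qed (auto simp: DeltaSub_def)
  show "\<forall>(r, D) \<in> set (rows T). \<forall>p m. cpath [t] p m \<and> r \<in> DeltaSub T p \<longrightarrow> m \<in> D"
  proof (clarify)
    fix r D p m
    assume "(r, D) \<in> set (rows T)" "cpath [t] p m" "r \<in> DeltaSub T p"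
    moreover from this have "m \<in> decisions T r"
      using t unfolding decides_def cpath_def DeltaSub_def by auto
    ultimately show "m \<in> D"
      using decisions_eq[OF T] by simp
  qed
qed

lemma tree_cost_decides_le:
  assumes "limited \<psi>" "decides k T W R d t" "\<And>f. f \<in> W \<Longrightarrow> \<psi> [f] \<le> m"
  shows "tree_cost \<psi> [t] \<le> \<psi> [] + m * d"
  unfolding tree_cost_def
proof (rule Max.boundedI)
  show "finite {\<psi> (map fst p) | p m. cpath [t] p m}"
    by (rule finite_path_costs)
  show "{\<psi> (map fst p) | p m. cpath [t] p m} \<noteq> {}"
    using wf_sub_has_path assms(2) by (fastforce simp: decides_def cpath_def)
  fix x
  assume "x \<in> {\<psi> (map fst p) | p m. cpath [t] p m}"
  then obtain p m' where x: "x = \<psi> (map fst p)" and p: "sub_path t p m'"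
    by (auto simp: cpath_def)
  have p_W: "fst ` set p \<subseteq> W" and p_d: "length p \<le> d"
    using assms(2) p unfolding decides_def by blast+
  have "\<psi> (map fst p) \<le> \<psi> [] + m * length (map fst p)"
    using p_W by (intro limited_le_sum_singletons[OF assms(1)] assms(3)) auto
  also have "\<dots> \<le> \<psi> [] + m * d"
    using p_d by simp
  finally show "x \<le> \<psi> [] + m * d"
    using x by simp
qed

section \<open>Certificates and the number of rows\<close>

lemma in_Delta_iff_index: "r \<in> Delta T \<longleftrightarrow> (\<exists>j < length (rows T). fst (rows T ! j) = r)"
  unfolding Delta_def in_set_conv_nth by auto

text \<open>A nondeterministic tree for this table has to single out each row by one of its paths.\<close>
definition index_decisions :: "'f table \<Rightarrow> 'f table" where
  "index_decisions T = (cols T, map (\<lambda>j. (fst (rows T ! j), {j})) [0..<length (rows T)])"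

lemma map_fst_rows_index_decisions: "map fst (rows (index_decisions T)) = map fst (rows T)"
  by (rule nth_equalityI) (simp_all add: index_decisions_def rows_def)

lemma cols_index_decisions [simp]: "cols (index_decisions T) = cols T"
  by (simp add: index_decisions_def cols_def)

lemma At_index_decisions [simp]: "At (index_decisions T) = At T"
  by (simp add: At_def)

lemma Delta_index_decisions [simp]: "Delta (index_decisions T) = Delta T"
  by (simp add: Delta_def map_fst_rows_index_decisions)

lemma DeltaSub_index_decisions [simp]: "DeltaSub (index_decisions T) p = DeltaSub T p"
  by (simp add: DeltaSub_def sat_def)

lemma index_decisions_step: "op_step T (index_decisions T)"
proof -
  have "op_step T (cols T, rows (index_decisions T))"
    by (rule op_step.change[OF map_fst_rows_index_decisions])
      (auto simp: index_decisions_def rows_def)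
  then show ?thesis
    by (simp add: index_decisions_def cols_def rows_def)
qed

lemma index_decisions_row:
  "j < length (rows T) \<Longrightarrow> (fst (rows T ! j), {j}) \<in> set (rows (index_decisions T))"
  by (auto simp: index_decisions_def rows_def)

lemma sum_powers_le: "(\<Sum>i\<le>m. (N::nat) ^ i) \<le> (N + 1) ^ m"
proof (induction m)
  case (Suc m)
  have "N * N ^ m \<le> N * (N + 1) ^ m"
    by (simp add: power_mono)
  then show ?case
    using Suc by (simp add: add_mono)
qed simp

locale psi_a_bounded =
  fixes k :: nat and C :: "'f table set" and \<psi> :: "'f list \<Rightarrow> nat" and m :: nat
  assumes closed: "closed_class k C"
    and limited: "limited \<psi>"
    and psi_a_le: "T \<in> C \<Longrightarrow> psi_a k \<psi> T \<le> m"
begin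

lemma nondet_tree_cost_le:
  assumes "T \<in> C"
  shows "\<exists>\<Gamma>. tree_for k False T \<Gamma> \<and> tree_cost \<psi> \<Gamma> \<le> m"
proof -
  have "\<exists>n \<Gamma>. tree_for k False T \<Gamma> \<and> tree_cost \<psi> \<Gamma> = n"
    using nondet_tree_exists[OF closed_class_tbl[OF closed assms]] by blast
  then have "\<exists>\<Gamma>. tree_for k False T \<Gamma> \<and> tree_cost \<psi> \<Gamma> = psi_a k \<psi> T"
    unfolding psi_a_def by (rule LeastI_ex)
  then show ?thesis
    using psi_a_le[OF assms] by auto
qed

lemma row_certificate:
  assumes T: "T \<in> C" and r: "r \<in> Delta T"
  shows "\<exists>p. sat T r p \<and> (\<forall>s \<in> Delta T. sat T s p \<longrightarrow> s = r) \<and>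
    set p \<subseteq> At T \<times> {..<k} \<and> \<psi> (map fst p) \<le> m"
proof -
  let ?T = "index_decisions T"
  have "?T \<in> C"
    using closed_class_step[OF closed T index_decisions_step] .
  then obtain \<Gamma> where \<Gamma>: "tree_for k False ?T \<Gamma>" "tree_cost \<psi> \<Gamma> \<le> m"
    using nondet_tree_cost_le by blast
  have "r \<in> \<Union>{DeltaSub T p | p d. cpath \<Gamma> p d}"
    using \<Gamma>(1) r unfolding tree_for_def by simp
  then obtain p d where p: "cpath \<Gamma> p d" "r \<in> DeltaSub T p"
    by blast
  have index: "d = j" if "j < length (rows T)" "fst (rows T ! j) \<in> DeltaSub T p" for j
    using \<Gamma>(1) index_decisions_row[OF that(1)] p(1) that(2) unfolding tree_for_def by fastforce
  have "s = r" if "s \<in> Delta T" "sat T s p" for s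
  proof -
    obtain i j where "i < length (rows T)" "fst (rows T ! i) = r"
      and "j < length (rows T)" "fst (rows T ! j) = s"
      using r \<open>s \<in> Delta T\<close> by (auto simp: in_Delta_iff_index)
    then show "s = r"
      using index p(2) that by (auto simp: DeltaSub_def)
  qed
  moreover obtain t where "t \<in> set \<Gamma>" "sub_path t p d"
    using p(1) by (auto simp: cpath_def)
  then have "set p \<subseteq> At T \<times> {..<k}"
    using \<Gamma>(1) sub_path_attrs by (fastforce simp: tree_for_def wf_tree_def)
  moreover have "\<psi> (map fst p) \<le> m"
    using path_cost_le_tree_cost[OF p(1)] \<Gamma>(2) by (rule le_trans)
  ultimately show ?thesis
    using p(2) by (auto simp: DeltaSub_def)
qed

lemma row_fun_certificate:
  assumes T: "T \<in> C" and g: "g \<in> row_funs T"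
  shows "\<exists>p. sat_fun (At T) g p \<and> (\<forall>g' \<in> row_funs T. sat_fun (At T) g' p \<longrightarrow> g' = g) \<and>
    fst ` set p \<subseteq> At T \<and> \<psi> (map fst p) \<le> m"
proof -
  have tbl: "tbl k T"
    using closed_class_tbl[OF closed T] .
  obtain r where r: "r \<in> Delta T" "g = row_fun T r"
    using g by (auto simp: row_funs_def)
  obtain p where p: "sat T r p" "\<forall>s \<in> Delta T. sat T s p \<longrightarrow> s = r"
      "set p \<subseteq> At T \<times> {..<k}" "\<psi> (map fst p) \<le> m"
    using row_certificate[OF T r(1)] by blast
  have "g' = g" if "g' \<in> row_funs T" "sat_fun (At T) g' p" for g'
    using that p(2) r sat_iff_sat_fun[OF tbl] by (auto simp: row_funs_def)
  moreover have "sat_fun (At T) g p"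
    using p(1) r sat_iff_sat_fun[OF tbl] by simp
  moreover have "fst ` set p \<subseteq> At T"
    using p(3) by auto
  ultimately show ?thesis
    using p(4) by blast
qed

lemma card_Delta_le:
  assumes T: "T \<in> C"
  shows "card (Delta T) \<le> (k * card (At T) + 1) ^ m"
proof -
  define cert where "cert r = (SOME p. sat T r p \<and> (\<forall>s \<in> Delta T. sat T s p \<longrightarrow> s = r) \<and>
    set p \<subseteq> At T \<times> {..<k} \<and> \<psi> (map fst p) \<le> m)" for r
  have cert: "sat T r (cert r) \<and> (\<forall>s \<in> Delta T. sat T s (cert r) \<longrightarrow> s = r) \<and>
      set (cert r) \<subseteq> At T \<times> {..<k} \<and> \<psi> (map fst (cert r)) \<le> m" if "r \<in> Delta T" for r
    unfolding cert_def by (rule someI_ex) (rule row_certificate[OF T that])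
  have "inj_on cert (Delta T)"
  proof (rule inj_onI)
    fix r s
    assume "r \<in> Delta T" "s \<in> Delta T" "cert r = cert s"
    then show "r = s"
      using cert[of r] cert[of s] by auto
  qed
  moreover have "cert ` Delta T \<subseteq> {p. set p \<subseteq> At T \<times> {..<k} \<and> length p \<le> m}"
  proof
    fix p
    assume "p \<in> cert ` Delta T"
    then obtain r where r: "r \<in> Delta T" "p = cert r"
      by blast
    have "length (map fst p) \<le> \<psi> (map fst p)"
      by (rule limited_length_le[OF limited])
    then show "p \<in> {p. set p \<subseteq> At T \<times> {..<k} \<and> length p \<le> m}"
      using cert[OF r(1)] r(2) by auto
  qed
  ultimately have "card (Delta T) \<le> card {p. set p \<subseteq> At T \<times> {..<k} \<and> length p \<le> m}"
    by (rule card_inj_on_le) (simp add: finite_lists_length_le finite_At)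
  also have "\<dots> = (\<Sum>i\<le>m. card (At T \<times> {..<k}) ^ i)"
    by (simp add: card_lists_length_le finite_At)
  also have "\<dots> \<le> (card (At T \<times> {..<k}) + 1) ^ m"
    by (rule sum_powers_le)
  finally show ?thesis
    by (simp add: card_cartesian_product mult.commute)
qed

definition cheap_attrs :: "'f table \<Rightarrow> 'f set" where
  "cheap_attrs T = {f \<in> At T. \<psi> [f] \<le> m}"

text \<open>
  Two rows differing at \<open>f\<close> give two rows of the projection onto \<open>f\<close>, whose certificates
  must therefore mention \<open>f\<close>.
\<close>
lemma eq_on_cheap_attrs_imp_eq:
  assumes T: "T \<in> C" and g: "g \<in> row_funs T" "g' \<in> row_funs T"
    and eq: "\<forall>f \<in> cheap_attrs T. g f = g' f"
  shows "g = g'"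
proof (rule ccontr)
  assume "g \<noteq> g'"
  then obtain f where f: "g f \<noteq> g' f"
    by blast
  then have fA: "f \<in> At T"
    using row_funs_outside_At g by metis
  then have "{f} \<inter> At T \<noteq> {}" "At T \<inter> {f} = {f}"
    by blast+
  then obtain T1 where T1: "T1 \<in> C" "At T1 = {f}" "row_funs T1 = restrict0 {f} ` row_funs T"
    using closed_class_restrict[OF closed T, of "{f}"] by metis
  have "restrict0 {f} g \<in> row_funs T1"
    using T1(3) g(1) by simp
  then obtain p where p: "sat_fun {f} (restrict0 {f} g) p"
      "\<forall>h \<in> row_funs T1. sat_fun {f} h p \<longrightarrow> h = restrict0 {f} g"
      "fst ` set p \<subseteq> {f}" "\<psi> (map fst p) \<le> m"
    using row_fun_certificate[OF T1(1)] unfolding T1(2) by blast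
  have "restrict0 {f} g' \<noteq> restrict0 {f} g"
    using f by (auto simp: restrict0_def fun_eq_iff)
  then have "\<not> sat_fun {f} (restrict0 {f} g') p"
    using p(2) T1(3) g(2) by blast
  then have "f \<in> set (map fst p)"
    using p(3) by (force simp: sat_fun_def)
  then have "\<psi> [f] \<le> m"
    using limited_singleton_le[OF limited] p(4) le_trans by blast
  then show False
    using eq f fA by (auto simp: cheap_attrs_def)
qed

text \<open>
  If \<open>S\<close> had more than \<open>m + 1\<close> elements, a certificate in the projection onto \<open>S - {j}\<close>
  would miss some \<open>i \<in> S - {j}\<close>, and the rows deviating from \<open>v\<close> exactly at \<open>j\<close>
  and exactly at \<open>i\<close> could not be told apart by it.
\<close>
lemma card_minimal_separating_le:
  assumes T: "T \<in> C" and S: "finite S" "S \<subseteq> At T" "separates (row_funs T) v S"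
    and min: "\<And>j. j \<in> S \<Longrightarrow> \<not> separates (row_funs T) v (S - {j})"
  shows "card S \<le> m + 1"
proof (rule ccontr)
  assume big: "\<not> card S \<le> m + 1"
  have dev: "\<exists>g \<in> row_funs T. (\<forall>f \<in> S - {j}. g f = v f) \<and> g j \<noteq> v j" if "j \<in> S" for j
    using not_separates_Diff_singleton[OF S(3) min[OF that]] .
  obtain j where j: "j \<in> S"
    using big by fastforce
  define A where "A = S - {j}"
  have A: "m + 1 \<le> card A" "A \<subseteq> At T"
    using big S(1,2) j by (auto simp: A_def)
  then have "A \<noteq> {}"
    by auto
  then have "A \<inter> At T \<noteq> {}" "At T \<inter> A = A"
    using A(2) by blast+
  then obtain T' where T': "T' \<in> C" "At T' = A" "row_funs T' = restrict0 A ` row_funs T"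
    using closed_class_restrict[OF closed T, of A] by metis
  obtain gj where gj: "gj \<in> row_funs T" "\<forall>f \<in> A. gj f = v f"
    using dev[OF j] by (auto simp: A_def)
  have "restrict0 A gj \<in> row_funs T'"
    using T'(3) gj(1) by simp
  then obtain p where p: "sat_fun A (restrict0 A gj) p"
      "\<forall>h \<in> row_funs T'. sat_fun A h p \<longrightarrow> h = restrict0 A gj" "\<psi> (map fst p) \<le> m"
    using row_fun_certificate[OF T'(1)] unfolding T'(2) by blast
  have "card (fst ` set p) \<le> m"
    using card_image_le[of "set p" fst] card_length[of p]
      limited_length_le[OF limited, of "map fst p"] p(3)
    by simp
  then obtain i where i: "i \<in> A" "i \<notin> fst ` set p"
    using A(1) card_mono[of "fst ` set p" A] by fastforce
  obtain gi where gi: "gi \<in> row_funs T" "\<forall>f \<in> S - {i}. gi f = v f" "gi i \<noteq> v i"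
    using dev i(1) by (auto simp: A_def)
  have "sat_fun A (restrict0 A gi) p"
    using p(1) gi(2) gj(2) i(2) by (force simp: sat_fun_def restrict0_def A_def)
  then have "restrict0 A gi = restrict0 A gj"
    using p(2) T'(3) gi(1) by blast
  then have "gi i = gj i"
    using i(1) by (metis restrict0_def)
  then show False
    using gi(3) gj(2) i(1) by simp
qed

lemma small_separating_list:
  assumes T: "T \<in> C"
  shows "\<exists>Q. distinct Q \<and> set Q \<subseteq> cheap_attrs T \<and> length Q \<le> m + 1 \<and>
    separates (row_funs T) v (set Q)"
proof -
  define P where "P S \<longleftrightarrow> S \<subseteq> cheap_attrs T \<and> separates (row_funs T) v S" for S
  have "P (cheap_attrs T)"
    using eq_on_cheap_attrs_imp_eq[OF T] unfolding P_def separates_def by auto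
  then obtain S where S: "P S" and min: "\<And>S'. P S' \<Longrightarrow> card S \<le> card S'"
    using ex_has_least_nat[of P _ card] by metis
  have SA: "S \<subseteq> At T"
    using S by (auto simp: P_def cheap_attrs_def)
  then have fin: "finite S"
    using finite_At by (rule finite_subset)
  have "card S \<le> m + 1"
  proof (rule card_minimal_separating_le[OF T fin SA])
    show "separates (row_funs T) v S"
      using S by (simp add: P_def)
    show "\<not> separates (row_funs T) v (S - {j})" if "j \<in> S" for j
      using min[of "S - {j}"] S that fin card_Diff1_less[OF fin that] by (auto simp: P_def)
  qed
  moreover obtain Q where "set Q = S" "distinct Q"
    using finite_distinct_list[OF fin] by blast
  ultimately show ?thesis
    using S distinct_card[of Q] by (auto simp: P_def)
qed

lemma psi_d_le:
  assumes T: "T \<in> C" and k: "0 < k"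
  shows "psi_d k \<psi> T \<le> \<psi> [] + m * (m + 1) * m * Suc (floor_log (k * length (cols T)))"
proof -
  have tbl: "tbl k T"
    using closed_class_tbl[OF closed T] .
  define L where "L = Suc (floor_log (k * length (cols T)))"
  have "k * card (At T) \<le> k * length (cols T)"
    unfolding At_def using card_length by (rule mult_le_mono2)
  moreover have "k * length (cols T) < 2 ^ L"
    using floor_log_exp2_gt[of "k * length (cols T)"] by (simp add: L_def)
  ultimately have "k * card (At T) + 1 \<le> 2 ^ L"
    by linarith
  then have "(k * card (At T) + 1) ^ m \<le> 2 ^ (m * L)"
    by (simp add: power_mono power_mult mult.commute)
  then have "card (Delta T) \<le> 2 ^ (m * L)"
    using card_Delta_le[OF T] by (rule le_trans[rotated])
  moreover have "\<exists>Q. distinct Q \<and> set Q \<subseteq> cheap_attrs T \<inter> At T \<and> length Q \<le> m + 1 \<and>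
      separates (row_funs T) v (set Q)" for v
    using small_separating_list[OF T, of v] by (auto simp: cheap_attrs_def)
  ultimately obtain t where t: "decides k T (cheap_attrs T) (Delta T) ((m + 1) * (m * L)) t"
    using decides_halving[OF tbl k] by blast
  have "psi_d k \<psi> T \<le> tree_cost \<psi> [t]"
    by (rule psi_d_le_tree_cost[OF tree_for_decides[OF tbl t]])
  also have "\<dots> \<le> \<psi> [] + m * ((m + 1) * (m * L))"
    by (rule tree_cost_decides_le[OF limited t]) (simp add: cheap_attrs_def)
  finally show ?thesis
    by (simp only: L_def mult.assoc)
qed

end

section \<open>Types of the functions U\<close>

lemma in_Dom_U_iff:
  "n \<in> Dom (U C b c) \<longleftrightarrow> b ` {T \<in> C. c T \<le> n} \<noteq> {} \<and> finite (b ` {T \<in> C. c T \<le> n})"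
  by (simp add: Dom_def U_def Let_def)

lemma the_U: "n \<in> Dom (U C b c) \<Longrightarrow> the (U C b c n) = Max (b ` {T \<in> C. c T \<le> n})"
  by (auto simp: Dom_def U_def Let_def split: if_splits)

lemma class_nonempty_if_has_typ_alpha: "has_typ (U C b c) TAlpha \<Longrightarrow> C \<noteq> {}"
  by (auto simp: has_typ_def in_Dom_U_iff dest!: infinite_imp_nonempty)

lemma bounded_if_has_typ_alpha:
  assumes "has_typ (U C b c) TAlpha"
  shows "\<exists>B. \<forall>T \<in> C. b T \<le> B"
proof -
  obtain B where B: "\<forall>n \<in> Dom (U C b c). the (U C b c n) \<le> B"
    using assms by (auto simp: has_typ_def bdd_above_pf_def)
  have "b T \<le> B" if T: "T \<in> C" for T
  proof -
    obtain n where n: "n \<in> Dom (U C b c)" "c T \<le> n"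
      using assms by (auto simp: has_typ_def infinite_nat_iff_unbounded_le)
    then have "b T \<le> Max (b ` {T \<in> C. c T \<le> n})"
      using T by (auto simp: in_Dom_U_iff intro: Max_ge)
    also have "\<dots> \<le> B"
      using B n(1) by (simp add: the_U)
    finally show ?thesis .
  qed
  then show ?thesis
    by blast
qed

lemma has_typ_alpha_or_beta_if_sublinear_bound:
  fixes G :: "nat \<Rightarrow> nat"
  assumes "C \<noteq> {}" and G: "mono G" and b: "\<And>T. T \<in> C \<Longrightarrow> b T \<le> G (c T)"
    and sublinear: "eventually (\<lambda>x. G x < x) sequentially"
  shows "has_typ (U C b c) TAlpha \<or> has_typ (U C b c) TBeta"
proof -
  have fin: "finite (b ` {T \<in> C. c T \<le> n})" for n
  proof (rule finite_subset)
    show "b ` {T \<in> C. c T \<le> n} \<subseteq> {..G n}"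
      using b G by (auto intro: le_trans dest: monoD)
  qed simp
  then have Dom: "n \<in> Dom (U C b c) \<longleftrightarrow> (\<exists>T \<in> C. c T \<le> n)" for n
    unfolding in_Dom_U_iff by blast
  obtain T0 where "T0 \<in> C"
    using assms(1) by blast
  then have "{c T0..} \<subseteq> Dom (U C b c)"
    unfolding subset_iff atLeast_iff Dom by blast
  then have infinite: "infinite (Dom (U C b c))"
    using infinite_Ici finite_subset by blast
  obtain K where K: "\<And>x. K \<le> x \<Longrightarrow> G x < x"
    using sublinear by (auto simp: eventually_sequentially)
  have "Dom_plus (U C b c) \<subseteq> {..G K}"
  proof
    fix n
    assume "n \<in> Dom_plus (U C b c)"
    then have n: "n \<in> Dom (U C b c)" "n \<le> Max (b ` {T \<in> C. c T \<le> n})"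
      by (auto simp: Dom_plus_def the_U)
    have "Max (b ` {T \<in> C. c T \<le> n}) \<in> b ` {T \<in> C. c T \<le> n}"
      using n(1) by (auto simp: in_Dom_U_iff intro: Max_in)
    then obtain T where T: "T \<in> C" "c T \<le> n" "n \<le> b T"
      using n(2) by auto
    have "c T < K"
    proof (rule ccontr)
      assume "\<not> c T < K"
      then have "G (c T) < c T"
        using K by simp
      then show False
        using T b[OF T(1)] by simp
    qed
    then have "G (c T) \<le> G K"
      using G by (simp add: monoD)
    then show "n \<in> {..G K}"
      using T(3) b[OF T(1)] by simp
  qed
  then have "finite (Dom_plus (U C b c))"
    using finite_subset by blast
  then show ?thesis
    using infinite by (auto simp: has_typ_def)
qed

lemma mono_floor_log_affine: "mono (\<lambda>x. a + b * Suc (floor_log (k * x)))"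
proof (rule monoI)
  fix x y :: nat
  assume "x \<le> y"
  then have "floor_log (k * x) \<le> floor_log (k * y)"
    by (intro floor_log_le_iff mult_le_mono2)
  then show "a + b * Suc (floor_log (k * x)) \<le> a + b * Suc (floor_log (k * y))"
    by simp
qed

lemma eventually_floor_log_affine_less:
  assumes "0 < k"
  shows "eventually (\<lambda>x. a + b * Suc (floor_log (k * x)) < x) sequentially"
proof -
  have "eventually (\<lambda>x. real a + real b * (1 + log 2 (real k * real x)) < real x) sequentially"
    using assms by real_asymp
  moreover have "eventually (\<lambda>x. 0 < x) sequentially"
    by (rule eventually_gt_at_top)
  ultimately show ?thesis
  proof eventually_elim
    case (elim x)
    have "2 ^ floor_log (k * x) \<le> k * x"
      using elim(2) assms by (simp add: floor_log_exp2_le)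
    then have "(2::real) ^ floor_log (k * x) \<le> real k * real x"
      by (metis of_nat_le_iff of_nat_mult of_nat_numeral of_nat_power)
    then have "real (floor_log (k * x)) \<le> log 2 (real k * real x)"
      by (rule le_log_of_power) simp
    then have
      "real (a + b * Suc (floor_log (k * x))) \<le> real a + real b * (1 + log 2 (real k * real x))"
      by (simp add: distrib_left mult_left_mono)
    then show ?case
      using elim(1) by linarith
  qed
qed

theorem lemma8:
  fixes k :: nat and C :: "'f table set" and \<psi> :: "'f list \<Rightarrow> nat"
  assumes "2 \<le> k"
    and "closed_class k C"
    and "limited \<psi>"
    and "has_typ (U C (psi_a k \<psi>) (psi_i \<psi>)) TAlpha"
  shows "has_typ (U C (psi_d k \<psi>) (psi_i \<psi>)) TAlpha \<or> has_typ (U C (psi_d k \<psi>) (psi_i \<psi>)) TBeta"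
proof -
  have k: "0 < k"
    using assms(1) by simp
  obtain m where "\<forall>T \<in> C. psi_a k \<psi> T \<le> m"
    using bounded_if_has_typ_alpha[OF assms(4)] by blast
  then interpret psi_a_bounded k C \<psi> m
    using assms(2,3) by unfold_locales auto
  define G where "G = (\<lambda>x. \<psi> [] + m * (m + 1) * m * Suc (floor_log (k * x)))"
  have "mono G"
    unfolding G_def by (rule mono_floor_log_affine)
  moreover have "psi_d k \<psi> T \<le> G (psi_i \<psi> T)" if "T \<in> C" for T
  proof -
    have "psi_d k \<psi> T \<le> G (length (cols T))"
      using psi_d_le[OF that k] by (simp add: G_def)
    also have "\<dots> \<le> G (psi_i \<psi> T)"
      using \<open>mono G\<close> limited_length_le[OF limited] by (simp add: monoD psi_i_def)
    finally show ?thesis .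
  qed
  moreover have "eventually (\<lambda>x. G x < x) sequentially"
    unfolding G_def by (rule eventually_floor_log_affine_less[OF k])
  ultimately show ?thesis
    using has_typ_alpha_or_beta_if_sublinear_bound class_nonempty_if_has_typ_alpha[OF assms(4)]
    by blast
qed

end
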